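(* Let $\nabla$ be the unique torsionless connection on $\mathcal E$ that is unitary with respect to the canonical metric $g$, and write $\nabla(e_i)=\sum_{j,k=1}^3e_j\otimes e_k\Gamma^i_{jk}$. Then $\Gamma^1_{32}=\Gamma^2_{13}=\Gamma^3_{21}=\tfrac12$, $\Gamma^1_{23}=\Gamma^2_{31}=\Gamma^3_{12}=-\tfrac12$, and all other $\Gamma^i_{jk}$ vanish; that is, $$\nabla(e_1)=\tfrac12(e_3\otimes e_2-e_2\otimes e_3),\ \nabla(e_2)=\tfrac12(e_1\otimes e_3-e_3\otimes e_1),\ \nabla(e_3)=\tfrac12(e_2\otimes e_1-e_1\otimes e_2).$$
   Context: Let $\mathcal O_3$ be the Cuntz algebra with three generators ($S_i^*S_i=1$, $\sum_jS_jS_j^*=1$), $\mathcal A$ the unital $*$-subalgebra generated by $S_1,S_2,S_3$. Let $\partial_1,\partial_2,\partial_3$ be the $*$-derivations of $\mathcal A$ with $\partial_1S_1=0,\ \partial_1S_2=-S_3,\ \partial_1S_3=S_2$; $\partial_2S_1=-S_3,\ \partial_2S_2=0,\ \partial_2S_3=S_1$; $\partial_3S_1=S_2,\ \partial_3S_2=-S_1,\ \partial_3S_3=0$. Let $\mathcal D=\sum_i\partial_i\otimes\sigma_i$ on $L^2(\mathcal O_3,\tau)\otimes\mathbb C^N$ ($\tau$ the KMS state, $\mathcal A$ acting by $a\otimes I$), with $\sigma_i$ mutually anticommuting involutions such that $\{\sigma_i\}$ and $\{I,\sigma_1\sigma_2,\sigma_1\sigma_3,\sigma_2\sigma_3\}$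 are linearly independent. The Connes calculus: $\Omega^k_{\mathcal D}(\mathcal A)=\Pi(\Omega^k(\mathcal A))/\Pi(\delta J_0^{k-1})$ with $\Pi(a_0\delta a_1\cdots\delta a_k)=a_0[\mathcal D,a_1]\cdots[\mathcal D,a_k]$, $J_0^k=\ker\Pi\cap\Omega^k(\mathcal A)$, differential $d$ induced by $\delta$, product $m$ induced by multiplication. $\mathcal E=\Omega^1_{\mathcal D}(\mathcal A)$ is free with basis $e_i=1\otimes\sigma_i$, $ae_i=e_ia$; $m(e_i\otimes e_j)$ = class of $1\otimes\sigma_i\sigma_j$. A connection is a $\mathbb C$-linear $\nabla:\mathcal E\to\mathcal E\otimes_{\mathcal A}\mathcal E$ with $\nabla(\omega a)=\nabla(\omega)a+\omega\otimes da$; torsionless means $m\circ\nabla+d=0$. The canonical metric is the right $\mathcal A$-linear $g$ with $g(e_i\otimes e_ja)=\delta_{ij}a$. Unitarity with respect to $g$ means $\Pi_g(\nabla)=dg$, where $dg,\Pi_g(\nabla):\mathcal E\otimes_{\mathcal A}\mathcal E\to\mathcal E$ are right $\mathcal A$-linear with $dg(e_i\otimes e_j)=d(g(e_i\otimes e_j))$ and $\Pi_g(\nabla)(e_i\otimes e_j)=(g\otimes\mathrm{id})\sigma_{23}(\nabla(e_i)\otimes e_j+\nabla(e_j)\otimes e_i)$, where $\sigma_{23}(e_a\otimes e_b\otimes e_cx)=e_a\otimes e_c\otimes e_bx$ and $(g\otimes\mathrm{id})(e_a\otimes e_b\otimes e_cx)=g(e_a\otimes e_b)e_cx$. (Such a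 $\nabla$ exists and is unique.) *)

theory Defs
  imports "HOL-Analysis.Analysis"
begin

(* Indices 1,2,3 are natural numbers; only values in {1..3} are ever used. *)

section \<open>The algebra A (abstractly: a unital complex *-algebra generated by Cuntz isometries)\<close>

(* sc : scalar embedding C -> A (c |-> c 1);  st : the involution *;  S i : the generators *)
inductive_set gen_alg :: "(complex \<Rightarrow> 'a::ring_1) \<Rightarrow> ('a \<Rightarrow> 'a) \<Rightarrow> (nat \<Rightarrow> 'a) \<Rightarrow> 'a set"
  for sc st S where
  gen_scalar: "sc c \<in> gen_alg sc st S"
| gen_S: "i \<in> {1..3} \<Longrightarrow> S i \<in> gen_alg sc st S"
| gen_Sstar: "i \<in> {1..3} \<Longrightarrow> st (S i) \<in> gen_alg sc st S"
| gen_add: "a \<in> gen_alg sc st S \<Longrightarrow> b \<in> gen_alg sc st S \<Longrightarrow> a + b \<in> gen_alg sc st S"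
| gen_mult: "a \<in> gen_alg sc st S \<Longrightarrow> b \<in> gen_alg sc st S \<Longrightarrow> a * b \<in> gen_alg sc st S"
| gen_star: "a \<in> gen_alg sc st S \<Longrightarrow> st a \<in> gen_alg sc st S"

definition cuntz3_algebra :: "(complex \<Rightarrow> 'a::ring_1) \<Rightarrow> ('a \<Rightarrow> 'a) \<Rightarrow> (nat \<Rightarrow> 'a) \<Rightarrow> bool" where
  "cuntz3_algebra sc st S \<longleftrightarrow>
     \<comment> \<open>complex unital algebra: sc is a unital ring hom onto central scalars\<close>
     (\<forall>x y. sc (x + y) = sc x + sc y) \<and> (\<forall>x y. sc (x * y) = sc x * sc y) \<and> sc 1 = 1 \<and>
     (\<forall>c a. sc c * a = a * sc c) \<and>
     \<comment> \<open>conjugate-linear involutive anti-automorphism\<close>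
     (\<forall>a b. st (a + b) = st a + st b) \<and> (\<forall>a b. st (a * b) = st b * st a) \<and>
     (\<forall>a. st (st a) = a) \<and> (\<forall>c. st (sc c) = sc (cnj c)) \<and>
     \<comment> \<open>Cuntz relations\<close>
     (\<forall>i\<in>{1..3}. st (S i) * S i = 1) \<and>
     S 1 * st (S 1) + S 2 * st (S 2) + S 3 * st (S 3) = 1 \<and>
     \<comment> \<open>A is generated by S1,S2,S3 as a unital *-algebra\<close>
     (\<forall>a. a \<in> gen_alg sc st S)"

definition so3_derivations ::
  "(complex \<Rightarrow> 'a::ring_1) \<Rightarrow> ('a \<Rightarrow> 'a) \<Rightarrow> (nat \<Rightarrow> 'a) \<Rightarrow> (nat \<Rightarrow> 'a \<Rightarrow> 'a) \<Rightarrow> bool" where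
  "so3_derivations sc st S der \<longleftrightarrow>
     (\<forall>i\<in>{1..3}.
        (\<forall>a b. der i (a + b) = der i a + der i b) \<and>
        (\<forall>c. der i (sc c) = 0) \<and>
        (\<forall>a b. der i (a * b) = der i a * b + a * der i b) \<and>
        (\<forall>a. der i (st a) = st (der i a))) \<and>
     der 1 (S 1) = 0 \<and> der 1 (S 2) = - S 3 \<and> der 1 (S 3) = S 2 \<and>
     der 2 (S 1) = - S 3 \<and> der 2 (S 2) = 0 \<and> der 2 (S 3) = S 1 \<and>
     der 3 (S 1) = S 2 \<and> der 3 (S 2) = - S 1 \<and> der 3 (S 3) = 0"

definition clifford3 :: "(nat \<Rightarrow> complex^'n^'n) \<Rightarrow> bool" where
  "clifford3 sig \<longleftrightarrow>
     (\<forall>i\<in>{1..3}. sig i ** sig i = mat 1) \<and>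
     (\<forall>i\<in>{1..3}. \<forall>j\<in>{1..3}. i \<noteq> j \<longrightarrow> sig i ** sig j = - (sig j ** sig i)) \<and>
     (\<forall>c::nat \<Rightarrow> complex. (\<Sum>i\<in>{1..3}. mat (c i) ** sig i) = 0 \<longrightarrow> (\<forall>i\<in>{1..3}. c i = 0)) \<and>
     (\<forall>c0 c12 c13 c23::complex.
        mat c0 + mat c12 ** (sig 1 ** sig 2) + mat c13 ** (sig 1 ** sig 3) + mat c23 ** (sig 2 ** sig 3) = 0
        \<longrightarrow> c0 = 0 \<and> c12 = 0 \<and> c13 = 0 \<and> c23 = 0)"

section \<open>Operators: elements of A (x) M_N(C), i.e. N x N matrices over A\<close>

(* a |-> a (x) I *)
definition emb :: "'a::ring_1 \<Rightarrow> 'a^'n^'n" where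
  "emb a = (\<chi> p q. if p = q then a else 0)"

(* T |-> 1 (x) T *)
definition Cl :: "(complex \<Rightarrow> 'a::ring_1) \<Rightarrow> complex^'n^'n \<Rightarrow> 'a^'n^'n" where
  "Cl sc T = (\<chi> p q. sc (T $ p $ q))"

(* [D, a (x) I] = sum_i der_i(a) (x) sig_i *)
definition Dcomm :: "(complex \<Rightarrow> 'a::ring_1) \<Rightarrow> (nat \<Rightarrow> 'a \<Rightarrow> 'a) \<Rightarrow> (nat \<Rightarrow> complex^'n^'n) \<Rightarrow> 'a \<Rightarrow> 'a^'n^'n" where
  "Dcomm sc der sig a = (\<Sum>i\<in>{1..3}. emb (der i a) ** Cl sc (sig i))"

(* [D,a1] ... [D,ak] *)
fun dprod :: "(complex \<Rightarrow> 'a::ring_1) \<Rightarrow> (nat \<Rightarrow> 'a \<Rightarrow> 'a) \<Rightarrow> (nat \<Rightarrow> complex^'n^'n) \<Rightarrow> 'a list \<Rightarrow> 'a^'n^'n" where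
  "dprod sc der sig [] = mat 1"
| "dprod sc der sig (a # as) = Dcomm sc der sig a ** dprod sc der sig as"

(* Pi(a0 delta a1 ... delta ak) = a0 [D,a1]...[D,ak]; a universal form is a finite sum of such terms,
   represented as a list of lists [a0,...,ak] *)
fun piterm :: "(complex \<Rightarrow> 'a::ring_1) \<Rightarrow> (nat \<Rightarrow> 'a \<Rightarrow> 'a) \<Rightarrow> (nat \<Rightarrow> complex^'n^'n) \<Rightarrow> 'a list \<Rightarrow> 'a^'n^'n" where
  "piterm sc der sig [] = 0"
| "piterm sc der sig (a0 # as) = emb a0 ** dprod sc der sig as"

definition PiForm :: "(complex \<Rightarrow> 'a::ring_1) \<Rightarrow> (nat \<Rightarrow> 'a \<Rightarrow> 'a) \<Rightarrow> (nat \<Rightarrow> complex^'n^'n) \<Rightarrow> 'a list list \<Rightarrow> 'a^'n^'n" where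
  "PiForm sc der sig ts = sum_list (map (piterm sc der sig) ts)"

(* Pi(delta omega) for omega represented by ts *)
definition PiDForm :: "(complex \<Rightarrow> 'a::ring_1) \<Rightarrow> (nat \<Rightarrow> 'a \<Rightarrow> 'a) \<Rightarrow> (nat \<Rightarrow> complex^'n^'n) \<Rightarrow> 'a list list \<Rightarrow> 'a^'n^'n" where
  "PiDForm sc der sig ts = sum_list (map (dprod sc der sig) ts)"

definition PiOmega :: "(complex \<Rightarrow> 'a::ring_1) \<Rightarrow> (nat \<Rightarrow> 'a \<Rightarrow> 'a) \<Rightarrow> (nat \<Rightarrow> complex^'n^'n) \<Rightarrow> nat \<Rightarrow> ('a^'n^'n) set" where
  "PiOmega sc der sig k = {PiForm sc der sig ts | ts. \<forall>t\<in>set ts. length t = k + 1}"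

(* Pi(delta J_0^{k-1}),  k >= 1 *)
definition Junk :: "(complex \<Rightarrow> 'a::ring_1) \<Rightarrow> (nat \<Rightarrow> 'a \<Rightarrow> 'a) \<Rightarrow> (nat \<Rightarrow> complex^'n^'n) \<Rightarrow> nat \<Rightarrow> ('a^'n^'n) set" where
  "Junk sc der sig k = {PiDForm sc der sig ts | ts. (\<forall>t\<in>set ts. length t = k) \<and> PiForm sc der sig ts = 0}"

section \<open>E = Omega^1_D and the connection in the basis e_i\<close>

(* E = Omega^1_D = Pi(Omega^1(A))  (the junk Pi(delta J_0^0) is zero) *)
definition Eforms :: "(complex \<Rightarrow> 'a::ring_1) \<Rightarrow> (nat \<Rightarrow> 'a \<Rightarrow> 'a) \<Rightarrow> (nat \<Rightarrow> complex^'n^'n) \<Rightarrow> ('a^'n^'n) set" where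
  "Eforms sc der sig = PiOmega sc der sig 1"

definition ebase :: "(complex \<Rightarrow> 'a::ring_1) \<Rightarrow> (nat \<Rightarrow> complex^'n^'n) \<Rightarrow> nat \<Rightarrow> 'a^'n^'n" where
  "ebase sc sig i = Cl sc (sig i)"

(* Elements of E (x)_A E are written  sum_{j,k} e_j (x) e_k c_jk  and represented by c :: nat => nat => 'a
   (E is free with central basis e_i); similarly for E (x) E (x) E and for E itself. *)

definition is_connection ::
  "(complex \<Rightarrow> 'a::ring_1) \<Rightarrow> (nat \<Rightarrow> 'a \<Rightarrow> 'a) \<Rightarrow> (nat \<Rightarrow> complex^'n^'n)
   \<Rightarrow> ('a^'n^'n \<Rightarrow> nat \<Rightarrow> nat \<Rightarrow> 'a) \<Rightarrow> bool" where
  "is_connection sc der sig nab \<longleftrightarrow>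
     (\<forall>\<omega>\<in>Eforms sc der sig. \<forall>\<eta>\<in>Eforms sc der sig. \<forall>j\<in>{1..3}. \<forall>k\<in>{1..3}.
        nab (\<omega> + \<eta>) j k = nab \<omega> j k + nab \<eta> j k) \<and>
     (\<forall>\<omega>\<in>Eforms sc der sig. \<forall>c. \<forall>j\<in>{1..3}. \<forall>k\<in>{1..3}.
        nab (emb (sc c) ** \<omega>) j k = sc c * nab \<omega> j k) \<and>
     \<comment> \<open>Leibniz rule nabla(omega a) = nabla(omega) a + omega (x) da, with omega = sum_j e_j w_j
         and da = [D,a] = sum_k e_k der_k(a)\<close>
     (\<forall>\<omega>\<in>Eforms sc der sig. \<forall>w a. \<omega> = (\<Sum>j\<in>{1..3}. ebase sc sig j ** emb (w j)) \<longrightarrow>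
        (\<forall>j\<in>{1..3}. \<forall>k\<in>{1..3}. nab (\<omega> ** emb a) j k = nab \<omega> j k * a + w j * der k a))"

(* m(sum e_j (x) e_k c_jk) represented by sum (1 (x) sig_j sig_k)(c_jk (x) 1) *)
definition mult2 :: "(complex \<Rightarrow> 'a::ring_1) \<Rightarrow> (nat \<Rightarrow> complex^'n^'n) \<Rightarrow> (nat \<Rightarrow> nat \<Rightarrow> 'a) \<Rightarrow> 'a^'n^'n" where
  "mult2 sc sig c = (\<Sum>j\<in>{1..3}. \<Sum>k\<in>{1..3}. Cl sc (sig j ** sig k) ** emb (c j k))"

(* m o nabla + d = 0 as maps E -> Omega^2_D = Pi(Omega^2)/Pi(delta J_0^1):
   for omega = Pi(sum a0 delta a1), d omega is the class of Pi(sum delta a0 delta a1) *)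
definition torsionless ::
  "(complex \<Rightarrow> 'a::ring_1) \<Rightarrow> (nat \<Rightarrow> 'a \<Rightarrow> 'a) \<Rightarrow> (nat \<Rightarrow> complex^'n^'n)
   \<Rightarrow> ('a^'n^'n \<Rightarrow> nat \<Rightarrow> nat \<Rightarrow> 'a) \<Rightarrow> bool" where
  "torsionless sc der sig nab \<longleftrightarrow>
     (\<forall>ts. (\<forall>t\<in>set ts. length t = 2) \<longrightarrow>
        mult2 sc sig (nab (PiForm sc der sig ts)) + PiDForm sc der sig ts \<in> Junk sc der sig 2)"

(* canonical metric: g(e_a (x) e_b x) = delta_ab x *)
definition gcan :: "nat \<Rightarrow> nat \<Rightarrow> 'a::ring_1" where
  "gcan a b = (if a = b then 1 else 0)"

(* coefficients of (sum e_a (x) e_b c_ab) (x) e_j *)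
definition tens_e :: "(nat \<Rightarrow> nat \<Rightarrow> 'a::ring_1) \<Rightarrow> nat \<Rightarrow> nat \<Rightarrow> nat \<Rightarrow> nat \<Rightarrow> 'a" where
  "tens_e c j = (\<lambda>a b l. if l = j then c a b else 0)"

definition sigma23 :: "(nat \<Rightarrow> nat \<Rightarrow> nat \<Rightarrow> 'a) \<Rightarrow> nat \<Rightarrow> nat \<Rightarrow> nat \<Rightarrow> 'a" where
  "sigma23 T = (\<lambda>a b c. T a c b)"

(* (g (x) id)(e_a (x) e_b (x) e_c x) = g(e_a (x) e_b) e_c x; result in coordinates of E *)
definition g_id :: "(nat \<Rightarrow> nat \<Rightarrow> nat \<Rightarrow> 'a::ring_1) \<Rightarrow> nat \<Rightarrow> 'a" where
  "g_id T = (\<lambda>c. \<Sum>a\<in>{1..3}. \<Sum>b\<in>{1..3}. gcan a b * T a b c)"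

(* Pi_g(nabla)(e_i (x) e_j) in coordinates of E *)
definition Pi_g ::
  "(complex \<Rightarrow> 'a::ring_1) \<Rightarrow> (nat \<Rightarrow> complex^'n^'n) \<Rightarrow> ('a^'n^'n \<Rightarrow> nat \<Rightarrow> nat \<Rightarrow> 'a) \<Rightarrow> nat \<Rightarrow> nat \<Rightarrow> nat \<Rightarrow> 'a" where
  "Pi_g sc sig nab i j = g_id (sigma23 (\<lambda>a b c.
       tens_e (nab (ebase sc sig i)) j a b c + tens_e (nab (ebase sc sig j)) i a b c))"

(* dg(e_i (x) e_j) = d(g(e_i (x) e_j)) = [D, g_ij] = sum_k e_k der_k(g_ij), in coordinates *)
definition dg :: "(nat \<Rightarrow> 'a \<Rightarrow> 'a) \<Rightarrow> nat \<Rightarrow> nat \<Rightarrow> nat \<Rightarrow> 'a::ring_1" where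
  "dg der i j = (\<lambda>k. der k (gcan i j))"

(* both sides are right A-linear, so equality on the basis e_i (x) e_j suffices *)
definition unitary ::
  "(complex \<Rightarrow> 'a::ring_1) \<Rightarrow> (nat \<Rightarrow> 'a \<Rightarrow> 'a) \<Rightarrow> (nat \<Rightarrow> complex^'n^'n)
   \<Rightarrow> ('a^'n^'n \<Rightarrow> nat \<Rightarrow> nat \<Rightarrow> 'a) \<Rightarrow> bool" where
  "unitary sc der sig nab \<longleftrightarrow>
     (\<forall>i\<in>{1..3}. \<forall>j\<in>{1..3}. \<forall>k\<in>{1..3}. Pi_g sc sig nab i j k = dg der i j k)"

definition Gamma0 :: "nat \<Rightarrow> nat \<Rightarrow> nat \<Rightarrow> complex" where
  "Gamma0 i j k =
     (if (i, j, k) \<in> {(1,3,2), (2,1,3), (3,2,1)} then 1/2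
      else if (i, j, k) \<in> {(1,2,3), (2,3,1), (3,1,2)} then - 1/2
      else 0)"

end

theory Submission
  imports Defs
begin

(*
  Unitarity makes the coefficients Gamma^i_jk of nabla(e_i) skew in (i, j), and torsion freeness
  prescribes their skew part Gamma^i_jk - Gamma^i_kj; a family that is skew in its first two indices and
  symmetric in its last two vanishes, so these two conditions determine nabla on the basis, as for the
  Levi-Civita connection.

  The skew part is computed from e_1 = S_2^* dS_3, e_2 = S_1^* dS_3, e_3 = S_2^* dS_1 (which rests on
  S_i^* S_j = delta_ij, a consequence of the Cuntz relations and the derivations) and m o nabla = -d.
  The (j, k)-skew part of a 2-form is read off by pairing it with sigma_k sigma_j under the trace; junk
  forms Pi(delta w) with Pi(w) = 0 are invisible to this pairing because the derivations close under
  commutators, [der_j, der_k] = - der_l for cyclic (j, k, l).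
*)

declare One_nat_def [simp del]

section \<open>Matrices with entries in a ring\<close>

lemma matrix_mul_add_rdistrib: "((A::'b::semiring_1^'n^'m) + B) ** C = A ** C + B ** C"
  by (simp add: vec_eq_iff matrix_matrix_mult_def distrib_right sum.distrib)

lemma matrix_mul_sum_left: "(\<Sum>i\<in>I. f i) ** (M::'b::semiring_1^'n^'m) = (\<Sum>i\<in>I. f i ** M)"
  by (induction I rule: infinite_finite_induct) (auto simp: matrix_mul_add_rdistrib)

lemma matrix_mul_sum_right: "(M::'b::semiring_1^'n^'m) ** (\<Sum>i\<in>I. f i) = (\<Sum>i\<in>I. M ** f i)"
  by (induction I rule: infinite_finite_induct) (auto simp: matrix_add_ldistrib)

lemma matrix_mul_neg_left: "(- (A::'b::ring_1^'n^'m)) ** B = - (A ** B)"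
  by (simp add: vec_eq_iff matrix_matrix_mult_def sum_negf)

lemma matrix_mul_neg_right: "(A::'b::ring_1^'n^'m) ** (- B) = - (A ** B)"
  by (simp add: vec_eq_iff matrix_matrix_mult_def sum_negf)

lemma trace_neg: "trace (- (A::'b::ring_1^'n^'n)) = - trace A"
  by (simp add: trace_def sum_negf)

lemma trace_sum: "trace (\<Sum>i\<in>I. f i) = (\<Sum>i\<in>I. trace (f i :: 'b::semiring_1^'n^'n))"
  unfolding trace_def sum_component by (rule sum.swap)

lemma emb_0 [simp]: "emb 0 = (0 :: 'b::ring_1^'n^'n)"
  by (simp add: emb_def vec_eq_iff)

lemma emb_1 [simp]: "emb 1 = (mat 1 :: 'b::ring_1^'n^'n)"
  by (simp add: emb_def mat_def)

lemma emb_add: "emb (a + b) = (emb a + emb b :: 'b::ring_1^'n^'n)"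
  by (simp add: emb_def vec_eq_iff)

lemma emb_mult: "emb a ** emb b = (emb (a * b) :: 'b::ring_1^'n^'n)"
proof -
  have "(\<Sum>k\<in>UNIV. (if p = k then a else 0) * (if k = q then b else 0)) = (if p = q then a * b else 0)"
    for p q :: 'n
  proof -
    have "(\<Sum>k\<in>UNIV. (if p = k then a else 0) * (if k = q then b else 0))
        = (\<Sum>k\<in>UNIV. if k = p then a * (if k = q then b else 0) else 0)"
      by (rule sum.cong) auto
    thus ?thesis by (simp add: sum.delta)
  qed
  thus ?thesis by (simp add: vec_eq_iff emb_def matrix_matrix_mult_def)
qed

lemma atLeastAtMost_1_3: "{1..3::nat} = {1, 2, 3}"
  by auto

lemma sum_upto_3: "(\<Sum>i\<in>{1..3::nat}. f i) = f 1 + f 2 + f 3"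
  by (simp add: atLeastAtMost_1_3 add.assoc)

lemma sum_sum_delta:
  assumes "finite A" "finite B" "j \<in> A" "k \<in> B"
  shows "(\<Sum>l\<in>A. \<Sum>m\<in>B. if l = j \<and> m = k then f l m else 0) = (f j k :: 'b::comm_monoid_add)"
proof -
  have "(\<Sum>m\<in>B. if l = j \<and> m = k then f l m else 0) = (if l = j then f l k else 0)" for l
    using assms by (cases "l = j") (simp_all add: sum.delta')
  thus ?thesis using assms by (simp add: sum.delta')
qed

lemma skew_idempotent3_eq_id:
  fixes Q :: "nat \<Rightarrow> nat \<Rightarrow> 'a::ring_1"
  assumes two: "\<And>x::'a. x + x = 0 \<Longrightarrow> x = 0"
    and diag: "\<And>i. i \<in> {1..3} \<Longrightarrow> Q i i = 1"
    and skew: "\<And>i j. i \<in> {1..3} \<Longrightarrow> j \<in> {1..3} \<Longrightarrow> i \<noteq> j \<Longrightarrow> Q j i = - Q i j"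
    and idem: "\<And>i j. Q i j = (\<Sum>m\<in>{1..3}. Q i m * Q m j)"
    and i: "i \<in> {1..3}" and j: "j \<in> {1..3}"
  shows "Q i j = (if i = j then 1 else 0)"
proof -
  define a b c where "a = Q 1 2" and "b = Q 1 3" and "c = Q 2 3"
  have Q: "Q 1 1 = 1" "Q 2 2 = 1" "Q 3 3 = 1" "Q 2 1 = - a" "Q 3 1 = - b" "Q 3 2 = - c"
    unfolding a_def b_def c_def by (auto intro: diag skew)
  have P: "Q i 1 * Q 1 j + Q i 2 * Q 2 j + Q i 3 * Q 3 j = Q i j" for i j
    using idem[of i j] unfolding sum_upto_3 by simp
  have bc: "a = b * c"
    using P[of 1 2] unfolding Q a_def[symmetric] b_def[symmetric] c_def[symmetric]
    by (simp add: add.assoc add_eq_0_iff2 neg_eq_iff_add_eq_0)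
  have ac: "b = - (a * c)"
    using P[of 1 3] unfolding Q a_def[symmetric] b_def[symmetric] c_def[symmetric]
    by (simp add: add.assoc add_eq_0_iff2 neg_eq_iff_add_eq_0)
  have ab: "c = a * b"
    using P[of 2 3] unfolding Q a_def[symmetric] b_def[symmetric] c_def[symmetric]
    by (simp add: add.assoc add_eq_0_iff2 neg_eq_iff_add_eq_0)
  have cc: "c * c = 0"
  proof -
    have "a * a + b * b = 0"
      using P[of 1 1] unfolding Q a_def[symmetric] b_def[symmetric] c_def[symmetric]
      by (simp add: add.assoc neg_eq_iff_add_eq_0 flip: minus_add_distrib)
    moreover have "a * a + c * c = 0"
      using P[of 2 2] unfolding Q a_def[symmetric] b_def[symmetric] c_def[symmetric]
      by (simp add: add.assoc add.left_commute neg_eq_iff_add_eq_0 flip: minus_add_distrib)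
    moreover have "b * b + c * c = 0"
      using P[of 3 3] unfolding Q a_def[symmetric] b_def[symmetric] c_def[symmetric]
      by (simp add: add.assoc neg_eq_iff_add_eq_0 flip: minus_add_distrib)
    moreover have "c * c + c * c = (a * a + c * c) + (b * b + c * c) - (a * a + b * b)"
      by (simp add: algebra_simps)
    ultimately show ?thesis using two[of "c * c"] by simp
  qed
  have "a = - (a * (c * c))"
    using bc ac by (simp add: mult.assoc)
  hence "a = 0" using cc by simp
  hence "a = 0" "b = 0" "c = 0" using ac ab by simp_all
  thus ?thesis using i j Q unfolding a_def b_def c_def
    by (auto simp: atLeastAtMost_1_3)
qed

lemma skew_sym_eq_0:
  fixes D :: "'i \<Rightarrow> 'i \<Rightarrow> 'i \<Rightarrow> 'a::ab_group_add"
  assumes two: "\<And>x::'a. x + x = 0 \<Longrightarrow> x = 0"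
    and skew: "\<And>a b c. a \<in> I \<Longrightarrow> b \<in> I \<Longrightarrow> c \<in> I \<Longrightarrow> D a b c = - D b a c"
    and sym: "\<And>a b c. a \<in> I \<Longrightarrow> b \<in> I \<Longrightarrow> c \<in> I \<Longrightarrow> D a b c = D a c b"
    and abc: "a \<in> I" "b \<in> I" "c \<in> I"
  shows "D a b c = 0"
proof (rule two)
  have "D a b c = - D b a c" using skew abc by blast
  also have "\<dots> = - D b c a" using sym abc by metis
  also have "\<dots> = D c b a" using skew abc by (metis minus_minus)
  also have "\<dots> = D c a b" using sym abc by metis
  also have "\<dots> = - D a c b" using skew abc by blast
  also have "\<dots> = - D a b c" using sym abc by metis
  finally show "D a b c + D a b c = 0" by (simp add: eq_neg_iff_add_eq_0)
qed

section \<open>Clifford traces\<close>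

lemma clifford3_sq: "clifford3 sig \<Longrightarrow> i \<in> {1..3} \<Longrightarrow> sig i ** sig i = mat 1"
  unfolding clifford3_def by blast

lemma clifford3_anticomm:
  "clifford3 sig \<Longrightarrow> i \<in> {1..3} \<Longrightarrow> j \<in> {1..3} \<Longrightarrow> i \<noteq> j \<Longrightarrow> sig i ** sig j = - (sig j ** sig i)"
  unfolding clifford3_def by blast

lemma trace_clifford3_mult2:
  fixes sig :: "nat \<Rightarrow> complex^'n::finite^'n"
  assumes C: "clifford3 sig" and i: "i \<in> {1..3}" and j: "j \<in> {1..3}"
  shows "trace (sig i ** sig j) = (if i = j then of_nat CARD('n) else 0)"
proof (cases "i = j")
  case True thus ?thesis using clifford3_sq[OF C i] by (simp add: trace_I)
next
  case False
  have "trace (sig i ** sig j) = trace (sig j ** sig i)" by (rule trace_mul_sym)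
  also have "\<dots> = - trace (sig i ** sig j)"
    using clifford3_anticomm[OF C j i] False by (simp add: trace_neg)
  finally show ?thesis using False by simp
qed

lemma trace_clifford3_mult4:
  fixes sig :: "nat \<Rightarrow> complex^'n::finite^'n"
  assumes C: "clifford3 sig" and a: "a \<in> {1..3}" and b: "b \<in> {1..3}" and c: "c \<in> {1..3}" and d: "d \<in> {1..3}"
  shows "trace (sig a ** sig b ** sig c ** sig d) = of_nat CARD('n) *
    ((if a = b \<and> c = d then 1 else 0) - (if a = c \<and> b = d then 1 else 0) + (if a = d \<and> b = c then 1 else 0))"
proof -
  note sq = clifford3_sq[OF C] and ac = clifford3_anticomm[OF C]
    and tr2 = trace_clifford3_mult2[OF C] and assoc = matrix_mul_assoc
  consider "c = d" | "c \<noteq> d" "b = c" | "c \<noteq> d" "b \<noteq> c" "b = d"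
    | "c \<noteq> d" "b \<noteq> c" "b \<noteq> d" "a = b" | "c \<noteq> d" "b \<noteq> c" "b \<noteq> d" "a = c"
    | "c \<noteq> d" "b \<noteq> c" "b \<noteq> d" "a = d"
  proof -
    have "c = d \<or> b = c \<or> b = d \<or> a = b \<or> a = c \<or> a = d"
      using a b c d by auto
    thus ?thesis using that by blast
  qed
  thus ?thesis
  proof cases
    case 1
    have "sig a ** sig b ** sig c ** sig d = sig a ** sig b" using sq[OF c] 1 by (simp flip: assoc)
    thus ?thesis using tr2[OF a b] 1 by auto
  next
    case 2
    have "sig a ** sig b ** sig c ** sig d = sig a ** sig d"
      using sq[OF b] 2 by (simp add: assoc[of "sig a" "sig c" "sig c", symmetric])
    thus ?thesis using tr2[OF a d] 2 by auto
  next
    case 3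
    have "sig a ** sig b ** sig c ** sig d = sig a ** sig b ** (sig c ** sig b)"
      using 3 by (simp flip: assoc)
    also have "\<dots> = - (sig a ** (sig b ** sig b) ** sig c)"
      using ac[OF c b] 3 by (simp add: matrix_mul_neg_right assoc)
    finally show ?thesis using sq[OF b] tr2[OF a c] 3 by (auto simp: trace_neg)
  next
    case 4
    have "sig a ** sig b ** sig c ** sig d = sig c ** sig d" using sq[OF b] 4 by simp
    thus ?thesis using tr2[OF c d] 4 by auto
  next
    case 5
    have "sig a ** sig b ** sig c ** sig d = - (sig b ** (sig c ** sig c) ** sig d)"
      using ac[OF c b] 5 by (simp add: matrix_mul_neg_left assoc)
    thus ?thesis using sq[OF c] tr2[OF b d] 5 by (auto simp: trace_neg)
  next
    case 6
    have "trace (sig a ** sig b ** sig c ** sig d) = trace (sig d ** (sig b ** sig c ** sig d))"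
      using 6 by (simp add: assoc)
    also have "\<dots> = trace ((sig b ** sig c ** sig d) ** sig d)" by (rule trace_mul_sym)
    also have "\<dots> = trace (sig b ** sig c)" using sq[OF d] by (simp flip: assoc)
    finally show ?thesis using tr2[OF b c] 6 by auto
  qed
qed

section \<open>Central scalars and the trace pairing\<close>

locale central_scalars =
  fixes sc :: "complex \<Rightarrow> 'a::ring_1"
  assumes sc_add: "sc (x + y) = sc x + sc y"
    and sc_mult: "sc (x * y) = sc x * sc y"
    and sc_1 [simp]: "sc 1 = 1"
    and sc_central: "sc c * a = a * sc c"
begin

lemma sc_0 [simp]: "sc 0 = 0"
  using sc_add[of 0 0] by simp

lemma sc_neg: "sc (- x) = - sc x"
  using sc_add[of x "- x"] by (simp add: eq_neg_iff_add_eq_0 add.commute)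

lemma sc_diff: "sc (x - y) = sc x - sc y"
  using sc_add[of x "- y"] by (simp add: sc_neg)

lemma sc_sum: "sc (sum f I) = (\<Sum>i\<in>I. sc (f i))"
  by (induction I rule: infinite_finite_induct) (auto simp: sc_add)

lemma mult_sc_eq_0_imp:
  assumes "c \<noteq> 0" and "a * sc c = 0"
  shows "a = 0"
proof -
  have "a = a * sc c * sc (1 / c)"
    using \<open>c \<noteq> 0\<close> by (simp add: mult.assoc flip: sc_mult)
  thus ?thesis using assms(2) by simp
qed

lemma double_eq_0_imp: "(x::'a) + x = 0 \<Longrightarrow> x = 0"
  using mult_sc_eq_0_imp[of 2 x] sc_add[of 1 1] by (simp add: mult_2_right)

lemma Cl_mult: "Cl sc T ** Cl sc U = Cl sc (T ** U)"
  by (simp add: vec_eq_iff Cl_def matrix_matrix_mult_def sc_sum sc_mult)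

lemma Cl_emb_entry: "(Cl sc T ** emb a) $ p $ q = sc (T $ p $ q) * a"
proof -
  have "(\<Sum>k\<in>UNIV. sc (T $ p $ k) * (if k = q then a else 0))
      = (\<Sum>k\<in>UNIV. if k = q then sc (T $ p $ k) * a else 0)"
    by (rule sum.cong) auto
  thus ?thesis by (simp add: emb_def Cl_def matrix_matrix_mult_def sum.delta')
qed

lemma emb_Cl_entry: "(emb a ** Cl sc T) $ p $ q = a * sc (T $ p $ q)"
proof -
  have "(\<Sum>k\<in>UNIV. (if p = k then a else 0) * sc (T $ k $ q))
      = (\<Sum>k\<in>UNIV. if k = p then a * sc (T $ k $ q) else 0)"
    by (rule sum.cong) auto
  thus ?thesis by (simp add: emb_def Cl_def matrix_matrix_mult_def sum.delta)
qed

lemma Cl_emb_commute: "Cl sc T ** emb a = emb a ** Cl sc T"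
  unfolding vec_eq_iff Cl_emb_entry emb_Cl_entry by (metis sc_central)

lemma emb_Cl_mult: "(emb x ** Cl sc U) ** (emb y ** Cl sc V) = emb (x * y) ** Cl sc (U ** V)"
proof -
  have "(emb x ** Cl sc U) ** (emb y ** Cl sc V) = emb x ** (Cl sc U ** emb y) ** Cl sc V"
    by (simp add: matrix_mul_assoc)
  also have "\<dots> = (emb x ** emb y) ** (Cl sc U ** Cl sc V)"
    by (simp add: Cl_emb_commute matrix_mul_assoc)
  finally show ?thesis by (simp add: emb_mult Cl_mult)
qed

definition trace_pairing :: "complex^'n^'n \<Rightarrow> 'a^'n^'n \<Rightarrow> 'a" where
  "trace_pairing T X = trace (X ** Cl sc T)"

lemma trace_pairing_add: "trace_pairing T (X + Y) = trace_pairing T X + trace_pairing T Y"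
  by (simp add: trace_pairing_def matrix_mul_add_rdistrib trace_def sum.distrib)

lemma trace_pairing_0 [simp]: "trace_pairing T 0 = 0"
  by (simp add: trace_pairing_def trace_def)

lemma trace_pairing_emb_Cl: "trace_pairing T (emb x ** Cl sc U) = x * sc (trace (U ** T))"
  by (simp add: trace_pairing_def trace_def emb_Cl_entry Cl_mult sc_sum sum_distrib_left
      flip: matrix_mul_assoc)

lemma trace_pairing_sum: "trace_pairing T (\<Sum>i\<in>I. f i) = (\<Sum>i\<in>I. trace_pairing T (f i))"
  by (simp add: trace_pairing_def matrix_mul_sum_left trace_sum)

lemma mult2_eq: "mult2 sc sig c = (\<Sum>j\<in>{1..3}. \<Sum>k\<in>{1..3}. emb (c j k) ** Cl sc (sig j ** sig k))"
  unfolding mult2_def by (simp add: Cl_emb_commute)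

context
  fixes sig :: "nat \<Rightarrow> complex^'n::finite^'n"
  assumes clifford: "clifford3 sig"
begin

lemma trace_pairing_one_form:
  assumes "k \<in> {1..3}"
  shows "trace_pairing (sig k) (\<Sum>m\<in>{1..3}. emb (v m) ** Cl sc (sig m)) = v k * sc (of_nat CARD('n))"
  using assms unfolding sum_upto_3
  by (auto simp: trace_pairing_add trace_pairing_emb_Cl trace_clifford3_mult2[OF clifford]
      atLeastAtMost_1_3)

lemma one_form_eq_0_imp:
  assumes "k \<in> {1..3}" and "(\<Sum>m\<in>{1..3}. emb (v m) ** Cl sc (sig m)) = 0"
  shows "v k = 0"
proof (rule mult_sc_eq_0_imp)
  show "v k * sc (of_nat CARD('n)) = 0"
    using trace_pairing_one_form[OF assms(1), of v] assms(2) by simp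
qed simp

lemma trace_pairing_two_form:
  assumes j: "j \<in> {1..3}" and k: "k \<in> {1..3}" and jk: "j \<noteq> k"
  shows "trace_pairing (sig k ** sig j) (\<Sum>l\<in>{1..3}. \<Sum>m\<in>{1..3}. emb (v l m) ** Cl sc (sig l ** sig m))
    = (v j k - v k j) * sc (of_nat CARD('n))"
proof -
  let ?n = "sc (of_nat CARD('n))"
  have entry: "trace_pairing (sig k ** sig j) (emb x ** Cl sc (sig l ** sig m))
      = (if l = j \<and> m = k then x * ?n else 0) - (if l = k \<and> m = j then x * ?n else 0)"
    if "l \<in> {1..3}" "m \<in> {1..3}" for x l m
  proof -
    have "trace_pairing (sig k ** sig j) (emb x ** Cl sc (sig l ** sig m))
        = x * sc (trace (sig l ** sig m ** sig k ** sig j))"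
      by (simp add: trace_pairing_emb_Cl matrix_mul_assoc)
    thus ?thesis
      using jk by (simp add: trace_clifford3_mult4[OF clifford that k j] sc_neg sc_mult)
  qed
  have "trace_pairing (sig k ** sig j) (\<Sum>l\<in>{1..3}. \<Sum>m\<in>{1..3}. emb (v l m) ** Cl sc (sig l ** sig m))
      = (\<Sum>l\<in>{1..3}. \<Sum>m\<in>{1..3}. (if l = j \<and> m = k then v l m * ?n else 0)
          - (if l = k \<and> m = j then v l m * ?n else 0))"
    by (simp add: trace_pairing_sum entry)
  also have "\<dots> = v j k * ?n - v k j * ?n"
    using j k by (simp add: sum_subtractf sum_sum_delta)
  finally show ?thesis by (simp add: left_diff_distrib)
qed

end

end

section \<open>The Cuntz algebra and its so(3) derivations\<close>

definition star_derivation :: "(complex \<Rightarrow> 'a::ring_1) \<Rightarrow> ('a \<Rightarrow> 'a) \<Rightarrow> ('a \<Rightarrow> 'a) \<Rightarrow> bool" where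
  "star_derivation sc st \<delta> \<longleftrightarrow>
     (\<forall>a b. \<delta> (a + b) = \<delta> a + \<delta> b) \<and> (\<forall>c. \<delta> (sc c) = 0) \<and>
     (\<forall>a b. \<delta> (a * b) = \<delta> a * b + a * \<delta> b) \<and> (\<forall>a. \<delta> (st a) = st (\<delta> a))"

lemma so3_derivations_star_derivation:
  "so3_derivations sc st S der \<Longrightarrow> i \<in> {1..3} \<Longrightarrow> star_derivation sc st (der i)"
  unfolding so3_derivations_def star_derivation_def by blast

locale cuntz3_so3 =
  fixes sc :: "complex \<Rightarrow> 'a::ring_1" and st :: "'a \<Rightarrow> 'a" and S :: "nat \<Rightarrow> 'a"
    and der :: "nat \<Rightarrow> 'a \<Rightarrow> 'a"
  assumes cuntz3: "cuntz3_algebra sc st S"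
    and so3: "so3_derivations sc st S der"

sublocale cuntz3_so3 \<subseteq> central_scalars sc
  using cuntz3 unfolding cuntz3_algebra_def by unfold_locales blast+

context cuntz3_so3
begin

lemma st_add: "st (a + b) = st a + st b"
  using cuntz3 unfolding cuntz3_algebra_def by blast

lemma st_0 [simp]: "st 0 = 0"
  using st_add[of 0 0] by simp

lemma st_neg: "st (- a) = - st a"
  using st_add[of a "- a"] by (simp add: eq_neg_iff_add_eq_0 add.commute)

lemma st_diff: "st (a - b) = st a - st b"
  using st_add[of a "- b"] by (simp add: st_neg)

lemma Sstar_S_self: "i \<in> {1..3} \<Longrightarrow> st (S i) * S i = 1"
  using cuntz3 unfolding cuntz3_algebra_def by blast

lemma sum_S_Sstar: "(\<Sum>m\<in>{1..3}. S m * st (S m)) = 1"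
  using cuntz3 unfolding cuntz3_algebra_def sum_upto_3 by blast

lemma der_S:
  "der 1 (S 1) = 0" "der 1 (S 2) = - S 3" "der 1 (S 3) = S 2"
  "der 2 (S 1) = - S 3" "der 2 (S 2) = 0" "der 2 (S 3) = S 1"
  "der 3 (S 1) = S 2" "der 3 (S 2) = - S 1" "der 3 (S 3) = 0"
  using so3 unfolding so3_derivations_def by blast+

context
  fixes \<delta> :: "'a \<Rightarrow> 'a"
  assumes \<delta>: "star_derivation sc st \<delta>"
begin

lemma star_derivation_add: "\<delta> (a + b) = \<delta> a + \<delta> b"
  and star_derivation_sc: "\<delta> (sc c) = 0"
  and star_derivation_mult: "\<delta> (a * b) = \<delta> a * b + a * \<delta> b"
  and star_derivation_st: "\<delta> (st a) = st (\<delta> a)"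
  using \<delta> unfolding star_derivation_def by blast+

lemma star_derivation_0: "\<delta> 0 = 0"
  and star_derivation_1: "\<delta> 1 = 0"
  using star_derivation_sc[of 0] star_derivation_sc[of 1] by simp_all

lemma star_derivation_neg: "\<delta> (- a) = - \<delta> a"
  using star_derivation_add[of a "- a"] star_derivation_0
  by (simp add: eq_neg_iff_add_eq_0 add.commute)

lemma star_derivation_eq_0_if_generators:
  assumes "\<And>i. i \<in> {1..3} \<Longrightarrow> \<delta> (S i) = 0"
  shows "\<delta> a = 0"
proof -
  have "a \<in> gen_alg sc st S"
    using cuntz3 unfolding cuntz3_algebra_def by blast
  thus ?thesis
    by induction (simp_all add: assms star_derivation_sc star_derivation_st star_derivation_add
        star_derivation_mult)
qed

end

lemma star_derivation_commutator:
  assumes "star_derivation sc st \<delta>" and "star_derivation sc st \<delta>'" and "star_derivation sc st \<delta>''"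
  shows "star_derivation sc st (\<lambda>a. \<delta> (\<delta>' a) - \<delta>' (\<delta> a) + \<delta>'' a)"
  using assms star_derivation_0[OF assms(1)] star_derivation_0[OF assms(2)]
  unfolding star_derivation_def by (simp add: st_add st_diff algebra_simps)

lemma der_commutator:
  assumes "(j, k, l) \<in> {(1, 2, 3), (2, 3, 1), (3, 1, 2)}"
  shows "der j (der k a) - der k (der j a) = - der l a"
proof -
  have jkl: "j \<in> {1..3}" "k \<in> {1..3}" "l \<in> {1..3}" using assms by auto
  note der = so3_derivations_star_derivation[OF so3]
  have "star_derivation sc st (\<lambda>a. der j (der k a) - der k (der j a) + der l a)"
    using jkl by (intro star_derivation_commutator der)
  moreover have "der j (der k (S i)) - der k (der j (S i)) + der l (S i) = 0" if "i \<in> {1..3}" for i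
    using that assms
    by (auto simp: der_S star_derivation_neg[OF der] star_derivation_0[OF der] atLeastAtMost_1_3)
  ultimately have "der j (der k a) - der k (der j a) + der l a = 0"
    using star_derivation_eq_0_if_generators[of "\<lambda>a. der j (der k a) - der k (der j a) + der l a"]
    by blast
  thus ?thesis by (simp add: eq_neg_iff_add_eq_0)
qed

lemma Sstar_S_skew:
  assumes l: "l \<in> {1..3}" and i: "i \<in> {1..3}" and der_Si: "der l (S i) = S j \<or> der l (S i) = - S j"
  shows "st (S j) * S i = - (st (S i) * S j)"
proof -
  note der = so3_derivations_star_derivation[OF so3 l]
  have "der l (st (S i) * S i) = 0"
    using Sstar_S_self[OF i] star_derivation_1[OF der] by simp
  hence leibniz: "st (der l (S i)) * S i + st (S i) * der l (S i) = 0"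
    by (simp add: star_derivation_mult[OF der] star_derivation_st[OF der])
  from der_Si show ?thesis
  proof
    assume "der l (S i) = S j"
    with leibniz show ?thesis by (simp add: eq_neg_iff_add_eq_0)
  next
    assume "der l (S i) = - S j"
    with leibniz have "st (S j) * S i + st (S i) * S j = 0"
      by (simp add: st_neg neg_eq_iff_add_eq_0 flip: minus_add_distrib)
    thus ?thesis by (simp add: eq_neg_iff_add_eq_0)
  qed
qed

lemma Sstar_S: "i \<in> {1..3} \<Longrightarrow> j \<in> {1..3} \<Longrightarrow> st (S i) * S j = (if i = j then 1 else 0)"
proof (rule skew_idempotent3_eq_id[where Q = "\<lambda>i j. st (S i) * S j"])
  show "x = 0" if "x + x = 0" for x :: 'a
    using that by (rule double_eq_0_imp)
  show "st (S i) * S i = 1" if "i \<in> {1..3}" for i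
    using that by (rule Sstar_S_self)
  have "st (S 2) * S 1 = - (st (S 1) * S 2)"
    by (rule Sstar_S_skew[of 3]) (simp_all add: der_S)
  moreover have "st (S 3) * S 1 = - (st (S 1) * S 3)"
    by (rule Sstar_S_skew[of 2]) (simp_all add: der_S)
  moreover have "st (S 3) * S 2 = - (st (S 2) * S 3)"
    by (rule Sstar_S_skew[of 1]) (simp_all add: der_S)
  ultimately
  show "st (S j) * S i = - (st (S i) * S j)" if "i \<in> {1..3}" "j \<in> {1..3}" "i \<noteq> j" for i j
    using that by (auto simp: atLeastAtMost_1_3)
  show "st (S i) * S j = (\<Sum>m\<in>{1..3}. st (S i) * S m * (st (S m) * S j))" for i j
  proof -
    have "st (S i) * S j = st (S i) * (\<Sum>m\<in>{1..3}. S m * st (S m)) * S j"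
      by (simp add: sum_S_Sstar)
    thus ?thesis by (simp add: sum_distrib_left sum_distrib_right mult.assoc)
  qed
qed

section \<open>Forms of degree one and two\<close>

(* A list [a0, a1] stands for a0 delta a1; the three coefficients below are those of
   Pi(a0 delta a1), Pi(delta a0 delta a1) and a0 (der l (der m a1)). *)
definition one_form_coeff :: "'a list list \<Rightarrow> nat \<Rightarrow> 'a" where
  "one_form_coeff ts m = sum_list (map (\<lambda>t. hd t * der m (t ! 1)) ts)"

definition d_form_coeff :: "'a list list \<Rightarrow> nat \<Rightarrow> nat \<Rightarrow> 'a" where
  "d_form_coeff ts l m = sum_list (map (\<lambda>t. der l (hd t) * der m (t ! 1)) ts)"

definition dd_form_coeff :: "'a list list \<Rightarrow> nat \<Rightarrow> nat \<Rightarrow> 'a" where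
  "dd_form_coeff ts l m = sum_list (map (\<lambda>t. hd t * der l (der m (t ! 1))) ts)"

lemma der_one_form_coeff:
  assumes "l \<in> {1..3}"
  shows "der l (one_form_coeff ts m) = d_form_coeff ts l m + dd_form_coeff ts l m"
proof -
  note der = so3_derivations_star_derivation[OF so3 assms]
  show ?thesis
    by (induction ts) (simp_all add: one_form_coeff_def d_form_coeff_def dd_form_coeff_def
        star_derivation_0[OF der] star_derivation_add[OF der] star_derivation_mult[OF der]
        algebra_simps)
qed

lemma dd_form_coeff_commutator:
  assumes "(j, k, l) \<in> {(1, 2, 3), (2, 3, 1), (3, 1, 2)}"
  shows "dd_form_coeff ts j k - dd_form_coeff ts k j = - one_form_coeff ts l"
proof (induction ts)
  case Nil thus ?case by (simp add: dd_form_coeff_def one_form_coeff_def)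
next
  case (Cons t ts)
  have "hd t * der j (der k (t ! 1)) - hd t * der k (der j (t ! 1)) = - (hd t * der l (t ! 1))"
    using der_commutator[OF assms] by (simp flip: right_diff_distrib)
  with Cons show ?case by (simp add: dd_form_coeff_def one_form_coeff_def algebra_simps)
qed

lemma dd_form_coeff_commute:
  assumes "\<And>m. m \<in> {1..3} \<Longrightarrow> one_form_coeff ts m = 0"
    and "j \<in> {1..3}" and "k \<in> {1..3}"
  shows "dd_form_coeff ts j k = dd_form_coeff ts k j"
proof (cases "j = k")
  case False
  define l where "l = 6 - j - k"
  have "j \<in> {1, 2, 3}" "k \<in> {1, 2, 3}"
    using assms(2,3) by (simp_all add: atLeastAtMost_1_3)
  hence "l \<in> {1..3} \<and> ((j, k, l) \<in> {(1, 2, 3), (2, 3, 1), (3, 1, 2)}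
      \<or> (k, j, l) \<in> {(1, 2, 3), (2, 3, 1), (3, 1, 2)})"
    using False unfolding l_def atLeastAtMost_1_3 by (elim insertE emptyE) simp_all
  thus ?thesis
    using dd_form_coeff_commutator[of _ _ l ts] assms(1)[of l] by auto
qed simp

lemma length_2_eq: "length t = 2 \<Longrightarrow> t = [hd t, t ! 1]"
  by (cases t; cases "tl t") auto

lemma PiForm_eq:
  assumes "\<forall>t\<in>set ts. length t = 2"
  shows "PiForm sc der sig ts = (\<Sum>m\<in>{1..3}. emb (one_form_coeff ts m) ** Cl sc (sig m))"
  using assms
proof (induction ts)
  case Nil thus ?case by (simp add: PiForm_def one_form_coeff_def)
next
  case (Cons t ts)
  have "t = [hd t, t ! 1]"
    using Cons.prems by (intro length_2_eq) simp
  hence "piterm sc der sig t = piterm sc der sig [hd t, t ! 1]"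
    by (rule arg_cong)
  also have "\<dots> = (\<Sum>m\<in>{1..3}. emb (hd t * der m (t ! 1)) ** Cl sc (sig m))"
    by (simp add: Dcomm_def matrix_mul_sum_right matrix_mul_assoc emb_mult)
  finally show ?case
    using Cons by (simp add: PiForm_def one_form_coeff_def emb_add matrix_mul_add_rdistrib sum.distrib)
qed

lemma dprod_2:
  "dprod sc der sig [a, b] =
     (\<Sum>l\<in>{1..3}. \<Sum>m\<in>{1..3}. emb (der l a * der m b) ** Cl sc (sig l ** sig m))"
  by (simp add: Dcomm_def matrix_mul_sum_left matrix_mul_sum_right emb_Cl_mult) (rule sum.swap)

lemma PiDForm_eq:
  assumes "\<forall>t\<in>set ts. length t = 2"
  shows "PiDForm sc der sig ts =
    (\<Sum>l\<in>{1..3}. \<Sum>m\<in>{1..3}. emb (d_form_coeff ts l m) ** Cl sc (sig l ** sig m))"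
  using assms
proof (induction ts)
  case Nil thus ?case by (simp add: PiDForm_def d_form_coeff_def)
next
  case (Cons t ts)
  have "t = [hd t, t ! 1]"
    using Cons.prems by (intro length_2_eq) simp
  hence "dprod sc der sig t = dprod sc der sig [hd t, t ! 1]"
    by (rule arg_cong)
  also have "\<dots> = (\<Sum>l\<in>{1..3}. \<Sum>m\<in>{1..3}.
      emb (der l (hd t) * der m (t ! 1)) ** Cl sc (sig l ** sig m))"
    by (rule dprod_2)
  finally show ?case
    using Cons by (simp add: PiDForm_def d_form_coeff_def emb_add matrix_mul_add_rdistrib
        sum.distrib)
qed

end

section \<open>Torsion and unitarity\<close>

lemma Gamma0_skew: "i \<in> {1..3} \<Longrightarrow> j \<in> {1..3} \<Longrightarrow> Gamma0 i j k = - Gamma0 j i k"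
  unfolding atLeastAtMost_1_3 by (elim insertE emptyE) (simp_all add: Gamma0_def)

locale cuntz3_dirac = cuntz3_so3 sc st S der for sc :: "complex \<Rightarrow> 'a::ring_1" and st S der +
  fixes sig :: "nat \<Rightarrow> complex^'n::finite^'n"
  assumes clifford: "clifford3 sig"
begin

lemma trace_pairing_Junk:
  assumes "X \<in> Junk sc der sig 2" and j: "j \<in> {1..3}" and k: "k \<in> {1..3}" and jk: "j \<noteq> k"
  shows "trace_pairing (sig k ** sig j) X = 0"
proof -
  obtain ts where l2: "\<forall>t\<in>set ts. length t = 2" and Pi0: "PiForm sc der sig ts = 0"
    and X: "X = PiDForm sc der sig ts"
    using assms(1) unfolding Junk_def by blast
  have y0: "one_form_coeff ts m = 0" if "m \<in> {1..3}" for m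
    using one_form_eq_0_imp[OF clifford that, of "one_form_coeff ts"] Pi0 PiForm_eq[OF l2, of sig]
    by simp
  have z: "d_form_coeff ts l m = - dd_form_coeff ts l m" if "l \<in> {1..3}" "m \<in> {1..3}" for l m
    using der_one_form_coeff[OF that(1), of ts m] y0[OF that(2)]
      star_derivation_0[OF so3_derivations_star_derivation[OF so3 that(1)]]
    by (simp add: eq_neg_iff_add_eq_0)
  have "d_form_coeff ts j k = d_form_coeff ts k j"
    using z[OF j k] z[OF k j] dd_form_coeff_commute[OF y0 j k] by simp
  thus ?thesis
    using trace_pairing_two_form[OF clifford j k jk, of "d_form_coeff ts"] X PiDForm_eq[OF l2, of sig]
    by simp
qed

lemma torsionless_skew_part:
  assumes "torsionless sc der sig nab" and l2: "\<forall>t\<in>set ts. length t = 2"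
    and j: "j \<in> {1..3}" and k: "k \<in> {1..3}" and jk: "j \<noteq> k"
  shows "nab (PiForm sc der sig ts) j k - nab (PiForm sc der sig ts) k j
    = d_form_coeff ts k j - d_form_coeff ts j k"
proof -
  let ?c = "nab (PiForm sc der sig ts)"
  have "mult2 sc sig ?c + PiDForm sc der sig ts \<in> Junk sc der sig 2"
    using assms(1) l2 unfolding torsionless_def by blast
  hence "trace_pairing (sig k ** sig j) (mult2 sc sig ?c + PiDForm sc der sig ts) = 0"
    using j k jk by (rule trace_pairing_Junk)
  hence "((?c j k - ?c k j) + (d_form_coeff ts j k - d_form_coeff ts k j)) * sc (of_nat CARD('n)) = 0"
    by (simp add: trace_pairing_add mult2_eq PiDForm_eq[OF l2] trace_pairing_two_form[OF clifford j k jk]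
        distrib_right)
  hence "(?c j k - ?c k j) + (d_form_coeff ts j k - d_form_coeff ts k j) = 0"
    by (rule mult_sc_eq_0_imp[rotated]) simp
  thus ?thesis by (simp add: algebra_simps eq_neg_iff_add_eq_0)
qed

lemma ebase_eq: "i \<in> {1..3} \<Longrightarrow> ebase sc sig i = (\<Sum>m\<in>{1..3}. emb (if m = i then 1 else 0) ** Cl sc (sig m))"
  unfolding atLeastAtMost_1_3 by (elim insertE emptyE) (simp_all add: sum_upto_3 ebase_def)

lemma torsionless_ebase:
  assumes T: "torsionless sc der sig nab" and e: "PiForm sc der sig [[x, y]] = ebase sc sig i"
    and j: "j \<in> {1..3}" and k: "k \<in> {1..3}"
  shows "nab (ebase sc sig i) j k - nab (ebase sc sig i) k j = der k x * der j y - der j x * der k y"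
proof (cases "j = k")
  case False
  thus ?thesis
    using torsionless_skew_part[OF T _ j k False, of "[[x, y]]"] e by (simp add: d_form_coeff_def)
qed simp

lemma PiForm_Sstar_dS:
  "PiForm sc der sig [[st (S 2), S 3]] = ebase sc sig 1"
  "PiForm sc der sig [[st (S 1), S 3]] = ebase sc sig 2"
  "PiForm sc der sig [[st (S 2), S 1]] = ebase sc sig 3"
  by (simp_all add: PiForm_eq one_form_coeff_def ebase_eq sum_upto_3 der_S Sstar_S)

lemma der_Sstar: "l \<in> {1..3} \<Longrightarrow> der l (st (S i)) = st (der l (S i))"
  using star_derivation_st[OF so3_derivations_star_derivation[OF so3]] .

lemma torsion_values:
  assumes "j \<in> {1..3}" and "k \<in> {1..3}"
  shows "der k (st (S 2)) * der j (S 3) - der j (st (S 2)) * der k (S 3) = sc (Gamma0 1 j k - Gamma0 1 k j)"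
    and "der k (st (S 1)) * der j (S 3) - der j (st (S 1)) * der k (S 3) = sc (Gamma0 2 j k - Gamma0 2 k j)"
    and "der k (st (S 2)) * der j (S 1) - der j (st (S 2)) * der k (S 1) = sc (Gamma0 3 j k - Gamma0 3 k j)"
  using assms unfolding atLeastAtMost_1_3
  by (elim insertE emptyE; simp add: der_Sstar der_S Sstar_S st_neg Gamma0_def sc_neg)+

lemma torsionless_Gamma0:
  assumes T: "torsionless sc der sig nab" and i: "i \<in> {1..3}" and j: "j \<in> {1..3}" and k: "k \<in> {1..3}"
  shows "nab (ebase sc sig i) j k - nab (ebase sc sig i) k j = sc (Gamma0 i j k) - sc (Gamma0 i k j)"
proof -
  have "i = 1 \<or> i = 2 \<or> i = 3"
    using i by (auto simp: atLeastAtMost_1_3)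
  thus ?thesis
    using torsionless_ebase[OF T PiForm_Sstar_dS(1) j k] torsionless_ebase[OF T PiForm_Sstar_dS(2) j k]
      torsionless_ebase[OF T PiForm_Sstar_dS(3) j k] torsion_values[OF j k]
    by (auto simp: sc_diff)
qed

lemma unitary_skew:
  assumes "unitary sc der sig nab" and i: "i \<in> {1..3}" and j: "j \<in> {1..3}" and k: "k \<in> {1..3}"
  shows "nab (ebase sc sig i) j k = - nab (ebase sc sig j) i k"
proof -
  have "Pi_g sc sig nab i j k = dg der i j k"
    using assms unfolding unitary_def by blast
  moreover have "dg der i j k = 0"
    using star_derivation_0[OF so3_derivations_star_derivation[OF so3 k]]
      star_derivation_1[OF so3_derivations_star_derivation[OF so3 k]]
    by (simp add: dg_def gcan_def)
  moreover have "Pi_g sc sig nab i j k = nab (ebase sc sig i) j k + nab (ebase sc sig j) i k"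
    using i j unfolding Pi_g_def g_id_def sigma23_def tens_e_def gcan_def
    by (simp add: sum_upto_3 atLeastAtMost_1_3) auto
  ultimately show ?thesis by (simp add: eq_neg_iff_add_eq_0)
qed

lemma torsionless_unitary_eq_Gamma0:
  assumes "torsionless sc der sig nab" and "unitary sc der sig nab"
    and "i \<in> {1..3}" and "j \<in> {1..3}" and "k \<in> {1..3}"
  shows "nab (ebase sc sig i) j k = sc (Gamma0 i j k)"
proof -
  define D where "D a b c = nab (ebase sc sig a) b c - sc (Gamma0 a b c)" for a b c
  have "D i j k = 0"
  proof (rule skew_sym_eq_0[where I = "{1..3}"])
    show "x = 0" if "x + x = 0" for x :: 'a
      using that by (rule double_eq_0_imp)
    show "D a b c = - D b a c" if "a \<in> {1..3}" "b \<in> {1..3}" "c \<in> {1..3}" for a b c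
      using unitary_skew[OF assms(2) that] Gamma0_skew[OF that(1,2), of c]
      unfolding D_def by (simp add: sc_neg)
    show "D a b c = D a c b" if "a \<in> {1..3}" "b \<in> {1..3}" "c \<in> {1..3}" for a b c
      using torsionless_Gamma0[OF assms(1) that] unfolding D_def by (simp add: algebra_simps)
  qed (use assms in auto)
  thus ?thesis unfolding D_def by simp
qed

end

theorem mainTheorem8:
  fixes sc :: "complex \<Rightarrow> 'a::ring_1"
    and st :: "'a \<Rightarrow> 'a"
    and S :: "nat \<Rightarrow> 'a"
    and der :: "nat \<Rightarrow> 'a \<Rightarrow> 'a"
    and sig :: "nat \<Rightarrow> complex^'n::finite^'n"
    and nab :: "'a^'n^'n \<Rightarrow> nat \<Rightarrow> nat \<Rightarrow> 'a"
  assumes "cuntz3_algebra sc st S"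
    and "so3_derivations sc st S der"
    and "clifford3 sig"
    and "is_connection sc der sig nab"
    and "torsionless sc der sig nab"
    and "unitary sc der sig nab"
  shows "\<forall>i\<in>{1..3}. \<forall>j\<in>{1..3}. \<forall>k\<in>{1..3}. nab (ebase sc sig i) j k = sc (Gamma0 i j k)"
proof -
  interpret cuntz3_dirac sc st S der sig
    using assms(1-3) by unfold_locales
  show ?thesis
    using torsionless_unitary_eq_Gamma0[OF assms(5,6)] by blast
qed

end
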